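(* For any graph $G$, $\mathcal{Z}^{\mathrm{TE}}_-(\check G)=\mathcal{Z}^{\mathrm{TE}}_-(G)$ and $\mathcal{Z}^{\mathrm{TS}}_-(\check G)=\mathcal{Z}^{\mathrm{TS}}_-(G)$, where $\check G$ is the skew-nontrivial subgraph of $G$.
   Context: Skew forcing: vertices are colored blue or white; if any vertex $u$ (blue or white) has exactly one white neighbor $v$, then $u$ may force $v$ to become blue. A skew forcing set is a (possibly empty) set of initially blue vertices from which repeated application of this rule turns every vertex blue; $\mathrm{Z}_-(G)$ is the minimum size of a skew forcing set. The skew-nontrivial subgraph $\check G$ of $G$ is obtained as follows: starting with no blue vertices, apply the skew forcing rule until no more forces are possible; then delete every blue vertex all of whose neighbors are blue, and delete every edge both of whose endpoints are blue. $\mathcal{Z}^{\mathrm{TE}}_-(G)$ has as vertices the minimum skew forcing sets of $G$, with $S_1S_2$ an edge iff $S_1\setminus S_2=\{v_1\}$ and $S_2\setminus S_1=\{v_2\}$ for some vertices $v_1,v_2$; $\mathcal{Z}^{\mathrm{TS}}_-(G)$ has the same vertices with the additional requirement $v_1v_2\in E(G)$. *)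

theory Defs
  imports Main
begin

type_synonym 'a graph = "'a set \<times> 'a set set"

definition verts :: "'a graph \<Rightarrow> 'a set" where "verts G = fst G"
definition edges :: "'a graph \<Rightarrow> 'a set set" where "edges G = snd G"

definition simple_graph :: "'a graph \<Rightarrow> bool" where
  "simple_graph G \<longleftrightarrow> finite (verts G) \<and>
     (\<forall>e\<in>edges G. \<exists>u v. e = {u, v} \<and> u \<noteq> v \<and> u \<in> verts G \<and> v \<in> verts G)"

definition nbrs :: "'a graph \<Rightarrow> 'a \<Rightarrow> 'a set" where
  "nbrs G u = {v. {u, v} \<in> edges G}"

text \<open>Final set of blue vertices obtained from initial blue set S by repeatedly applying
  the skew forcing rule: any vertex u (blue or white) with exactly one white neighbour v
  forces v blue.\<close>
inductive_set skew_closure :: "'a graph \<Rightarrow> 'a set \<Rightarrow> 'a set" for G S where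
  init: "v \<in> S \<Longrightarrow> v \<in> skew_closure G S"
| force: "u \<in> verts G \<Longrightarrow> v \<in> nbrs G u \<Longrightarrow>
           (\<forall>w\<in>nbrs G u. w \<noteq> v \<longrightarrow> w \<in> skew_closure G S) \<Longrightarrow> v \<in> skew_closure G S"

definition skew_forcing_set :: "'a graph \<Rightarrow> 'a set \<Rightarrow> bool" where
  "skew_forcing_set G S \<longleftrightarrow> S \<subseteq> verts G \<and> skew_closure G S = verts G"

definition Z_minus :: "'a graph \<Rightarrow> nat" where
  "Z_minus G = Min {card S | S. skew_forcing_set G S}"

definition min_skew_forcing_sets :: "'a graph \<Rightarrow> 'a set set" where
  "min_skew_forcing_sets G = {S. skew_forcing_set G S \<and> card S = Z_minus G}"

definition skew_nontrivial :: "'a graph \<Rightarrow> 'a graph" where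
  "skew_nontrivial G =
     (let B = skew_closure G {} in
      (verts G - {v \<in> B. nbrs G v \<subseteq> B}, {e \<in> edges G. \<not> e \<subseteq> B}))"

definition ZTE_minus :: "'a graph \<Rightarrow> 'a set graph" where
  "ZTE_minus G = (min_skew_forcing_sets G,
     {{S1, S2} | S1 S2. S1 \<in> min_skew_forcing_sets G \<and> S2 \<in> min_skew_forcing_sets G \<and>
        (\<exists>v1 v2. S1 - S2 = {v1} \<and> S2 - S1 = {v2})})"

definition ZTS_minus :: "'a graph \<Rightarrow> 'a set graph" where
  "ZTS_minus G = (min_skew_forcing_sets G,
     {{S1, S2} | S1 S2. S1 \<in> min_skew_forcing_sets G \<and> S2 \<in> min_skew_forcing_sets G \<and>
        (\<exists>v1 v2. S1 - S2 = {v1} \<and> S2 - S1 = {v2} \<and> {v1, v2} \<in> edges G)})"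

end

theory Submission
  imports Defs
begin

text \<open>Let B be the set of vertices forced from the empty set and G' the skew-nontrivial
  subgraph. A minimum skew forcing set avoids B, since B turns blue for free. Every force
  of G' is a force of G; conversely a force of G either lands in B or survives in G',
  provided every vertex of B with a neighbour outside B is already forced in G' from the
  empty set. To see this, fix a chronology of forces producing B. A forcer lying in B has
  all its neighbours in B, so the vertices of B with all neighbours in B are forced only by
  each other; as each vertex forces at most once, counting shows that they force only each
  other, so every other vertex of B is forced from outside B, along an edge kept in G'.
  Hence G and G' have the same minimum skew forcing sets, and since exchanged vertices lie
  outside B, the same token-sliding edges.\<close>

lemma nbrs_sym: "v \<in> nbrs G u \<longleftrightarrow> u \<in> nbrs G v"
  by (simp add: nbrs_def insert_commute)

lemma nbrs_subset_verts:
  assumes "simple_graph G" shows "nbrs G u \<subseteq> verts G"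
proof
  fix v assume "v \<in> nbrs G u"
  then have "{u, v} \<in> edges G" by (simp add: nbrs_def)
  then show "v \<in> verts G"
    using assms unfolding simple_graph_def by (metis doubleton_eq_iff)
qed

lemma skew_closure_forceI:
  "u \<in> verts G \<Longrightarrow> v \<in> nbrs G u \<Longrightarrow> nbrs G u - {v} \<subseteq> skew_closure G S \<Longrightarrow>
   v \<in> skew_closure G S"
  by (rule skew_closure.force) auto

lemma skew_closure_least:
  assumes "S \<subseteq> C"
    and "\<And>u v. u \<in> verts G \<Longrightarrow> v \<in> nbrs G u \<Longrightarrow> nbrs G u - {v} \<subseteq> C \<Longrightarrow> v \<in> C"
  shows "skew_closure G S \<subseteq> C"
proof
  fix x assume "x \<in> skew_closure G S"
  then show "x \<in> C"
    by (induction rule: skew_closure.induct) (use assms in blast)+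
qed

lemma subset_skew_closure: "S \<subseteq> skew_closure G S"
  by (auto intro: skew_closure.init)

lemma skew_closure_subset_verts:
  assumes "simple_graph G" shows "skew_closure G S \<subseteq> S \<union> verts G"
  using nbrs_subset_verts[OF assms] by (intro skew_closure_least) auto

lemma skew_closure_subset_skew_closure:
  assumes "S \<subseteq> skew_closure G T" shows "skew_closure G S \<subseteq> skew_closure G T"
  using assms by (intro skew_closure_least) (auto intro: skew_closure_forceI)

lemma skew_closure_mono: "S \<subseteq> T \<Longrightarrow> skew_closure G S \<subseteq> skew_closure G T"
  by (meson skew_closure_subset_skew_closure subset_skew_closure subset_trans)

lemma skew_closure_Diff_skew_closure_empty:
  "skew_closure G (S - skew_closure G {}) = skew_closure G S"
proof
  have "skew_closure G {} \<subseteq> skew_closure G (S - skew_closure G {})"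
    by (rule skew_closure_mono) simp
  then have "S \<subseteq> skew_closure G (S - skew_closure G {})"
    using subset_skew_closure[of "S - skew_closure G {}" G] by blast
  then show "skew_closure G S \<subseteq> skew_closure G (S - skew_closure G {})"
    by (rule skew_closure_subset_skew_closure)
qed (rule skew_closure_mono, blast)

lemma skew_forcing_set_verts:
  assumes "simple_graph G" shows "skew_forcing_set G (verts G)"
  using skew_closure_subset_verts[OF assms, of "verts G"] subset_skew_closure[of "verts G" G]
  unfolding skew_forcing_set_def by simp

lemma finite_skew_forcing_set_cards:
  assumes "simple_graph G" shows "finite {card S | S. skew_forcing_set G S}"
proof (rule finite_subset)
  show "{card S | S. skew_forcing_set G S} \<subseteq> card ` Pow (verts G)"
    by (auto simp: skew_forcing_set_def)
qed (use assms in \<open>simp add: simple_graph_def\<close>)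

lemma Z_minus_le:
  assumes "simple_graph G" and "skew_forcing_set G S" shows "Z_minus G \<le> card S"
  unfolding Z_minus_def using finite_skew_forcing_set_cards[OF assms(1)] assms(2)
  by (intro Min_le) auto

lemma min_skew_forcing_sets_nonempty:
  assumes "simple_graph G" shows "min_skew_forcing_sets G \<noteq> {}"
proof -
  have "Z_minus G \<in> {card S | S. skew_forcing_set G S}"
    unfolding Z_minus_def using finite_skew_forcing_set_cards[OF assms] skew_forcing_set_verts[OF assms]
    by (intro Min_in) auto
  then show ?thesis unfolding min_skew_forcing_sets_def by auto
qed

lemma min_skew_forcing_set_disjoint:
  assumes G: "simple_graph G" and S: "S \<in> min_skew_forcing_sets G"
  shows "S \<inter> skew_closure G {} = {}"
proof (rule ccontr)
  assume "S \<inter> skew_closure G {} \<noteq> {}"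
  moreover have "finite S"
    using S G finite_subset
    unfolding min_skew_forcing_sets_def skew_forcing_set_def simple_graph_def by auto
  ultimately have "card (S - skew_closure G {}) < card S"
    by (intro psubset_card_mono) auto
  moreover have "skew_forcing_set G (S - skew_closure G {})"
    using S unfolding min_skew_forcing_sets_def skew_forcing_set_def
    by (auto simp: skew_closure_Diff_skew_closure_empty)
  ultimately show False
    using Z_minus_le[OF G] S unfolding min_skew_forcing_sets_def by force
qed

lemma verts_skew_nontrivial:
  "verts (skew_nontrivial G) =
     verts G - {v \<in> skew_closure G {}. nbrs G v \<subseteq> skew_closure G {}}"
  by (simp add: skew_nontrivial_def verts_def Let_def)

lemma edges_skew_nontrivial:
  "edges (skew_nontrivial G) = {e \<in> edges G. \<not> e \<subseteq> skew_closure G {}}"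
  by (simp add: skew_nontrivial_def edges_def Let_def)

lemma nbrs_skew_nontrivial:
  "nbrs (skew_nontrivial G) u =
     {v \<in> nbrs G u. u \<notin> skew_closure G {} \<or> v \<notin> skew_closure G {}}"
  by (auto simp: nbrs_def edges_skew_nontrivial)

lemma simple_graph_skew_nontrivial:
  assumes "simple_graph G" shows "simple_graph (skew_nontrivial G)"
  unfolding simple_graph_def
proof (intro conjI ballI)
  show "finite (verts (skew_nontrivial G))"
    using assms by (simp add: simple_graph_def verts_skew_nontrivial)
next
  fix e assume "e \<in> edges (skew_nontrivial G)"
  then have e: "e \<in> edges G" "\<not> e \<subseteq> skew_closure G {}"
    by (auto simp: edges_skew_nontrivial)
  then obtain u v where uv: "e = {u, v}" "u \<noteq> v" "u \<in> verts G" "v \<in> verts G"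
    using assms unfolding simple_graph_def by blast
  have "v \<in> nbrs G u" "u \<in> nbrs G v"
    using e(1) uv(1) by (auto simp: nbrs_def insert_commute)
  then have "u \<in> verts (skew_nontrivial G) \<and> v \<in> verts (skew_nontrivial G)"
    using e(2) uv by (auto simp: verts_skew_nontrivial)
  then show "\<exists>u v. e = {u, v} \<and> u \<noteq> v \<and> u \<in> verts (skew_nontrivial G) \<and>
      v \<in> verts (skew_nontrivial G)"
    using uv by blast
qed

lemma skew_closure_skew_nontrivial_subset:
  "skew_closure (skew_nontrivial G) S \<subseteq> skew_closure G S"
proof (rule skew_closure_least[OF subset_skew_closure])
  fix u v
  assume u: "u \<in> verts (skew_nontrivial G)" and v: "v \<in> nbrs (skew_nontrivial G) u"
    and others: "nbrs (skew_nontrivial G) u - {v} \<subseteq> skew_closure G S"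
  have "skew_closure G {} \<subseteq> skew_closure G S" by (rule skew_closure_mono) simp
  with others have "nbrs G u - {v} \<subseteq> skew_closure G S"
    by (auto simp: nbrs_skew_nontrivial)
  moreover have "u \<in> verts G" "v \<in> nbrs G u"
    using u v by (auto simp: verts_skew_nontrivial nbrs_skew_nontrivial)
  ultimately show "v \<in> skew_closure G S"
    by (intro skew_closure_forceI)
qed

text \<open>(u, v) \<in> P records that u forces v; the forces are performed in the order in which
  they are inserted, starting from no blue vertices, and snd ` P is the resulting blue set.\<close>
inductive skew_chronology :: "'a graph \<Rightarrow> ('a \<times> 'a) set \<Rightarrow> bool" for G where
  empty: "skew_chronology G {}"
| force: "skew_chronology G P \<Longrightarrow> u \<in> verts G \<Longrightarrow> v \<in> nbrs G u \<Longrightarrow> v \<notin> snd ` P \<Longrightarrow>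
    nbrs G u - {v} \<subseteq> snd ` P \<Longrightarrow> skew_chronology G (insert (u, v) P)"

lemma skew_chronology_targets:
  "skew_chronology G P \<Longrightarrow> snd ` P \<subseteq> skew_closure G {}"
proof (induction rule: skew_chronology.induct)
  case (force P u v)
  then have "v \<in> skew_closure G {}" by (intro skew_closure_forceI) auto
  with force.IH show ?case by simp
qed simp

lemma skew_chronology_finite: "skew_chronology G P \<Longrightarrow> finite P"
  by (induction rule: skew_chronology.induct) simp_all

lemma skew_chronology_forcer:
  "skew_chronology G P \<Longrightarrow> (u, v) \<in> P \<Longrightarrow>
     u \<in> verts G \<and> v \<in> nbrs G u \<and> nbrs G u \<subseteq> snd ` P"
  by (induction rule: skew_chronology.induct) auto

lemma skew_chronology_inj_on_fst: "skew_chronology G P \<Longrightarrow> inj_on fst P"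
proof (induction rule: skew_chronology.induct)
  case (force P u v)
  have "u \<notin> fst ` P"
    using force skew_chronology_forcer[OF force.hyps(1)] by force
  then show ?case using force.IH by (auto simp: inj_on_def)
qed simp

lemma skew_chronology_inj_on_snd: "skew_chronology G P \<Longrightarrow> inj_on snd P"
  by (induction rule: skew_chronology.induct) (auto simp: inj_on_def)

lemma ex_skew_chronology:
  assumes G: "simple_graph G"
  shows "\<exists>P. skew_chronology G P \<and> snd ` P = skew_closure G {}"
proof -
  have fin: "finite (skew_closure G {})"
    using skew_closure_subset_verts[OF G, of "{}"] G finite_subset
    unfolding simple_graph_def by auto
  have "card (snd ` Q) < card (skew_closure G {}) + 1" if "skew_chronology G Q" for Q
    using card_mono[OF fin skew_chronology_targets[OF that]] by simp
  then obtain P where P: "skew_chronology G P"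
    and greatest: "\<forall>Q. skew_chronology G Q \<longrightarrow> card (snd ` Q) \<le> card (snd ` P)"
    using ex_has_greatest_nat[of "skew_chronology G" "{}" "\<lambda>Q. card (snd ` Q)"]
      skew_chronology.empty by blast
  have "skew_closure G {} \<subseteq> snd ` P"
  proof (rule skew_closure_least)
    fix u v assume uv: "u \<in> verts G" "v \<in> nbrs G u" "nbrs G u - {v} \<subseteq> snd ` P"
    show "v \<in> snd ` P"
    proof (rule ccontr)
      assume v: "v \<notin> snd ` P"
      have "card (snd ` insert (u, v) P) = card (snd ` P) + 1"
        using v skew_chronology_finite[OF P] by simp
      then show False
        using greatest skew_chronology.force[OF P uv(1,2) v uv(3)] by fastforce
    qed
  qed simp
  then show ?thesis
    using P skew_chronology_targets[OF P] by blast
qed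

lemma skew_chronology_interior_forcers:
  assumes P: "skew_chronology G P" and PB: "snd ` P = skew_closure G {}"
  defines "R \<equiv> {v \<in> skew_closure G {}. nbrs G v \<subseteq> skew_closure G {}}"
  shows "fst ` {p \<in> P. snd p \<in> R} = R"
proof (rule card_subset_eq)
  let ?PR = "{p \<in> P. snd p \<in> R}"
  have "R \<subseteq> snd ` P"
    using PB unfolding R_def by blast
  then show "finite R"
    using finite_subset skew_chronology_finite[OF P] by blast
  show "fst ` ?PR \<subseteq> R"
  proof
    fix u assume "u \<in> fst ` ?PR"
    then obtain w where uw: "(u, w) \<in> P" "w \<in> R" by force
    then have "u \<in> nbrs G w"
      using skew_chronology_forcer[OF P] by (simp add: nbrs_sym)
    then show "u \<in> R"
      using uw skew_chronology_forcer[OF P uw(1)] PB unfolding R_def by blast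
  qed
  have "card (fst ` ?PR) = card ?PR"
    by (rule card_image, rule inj_on_subset[OF skew_chronology_inj_on_fst[OF P]]) auto
  also have "\<dots> = card (snd ` ?PR)"
    by (rule card_image[symmetric], rule inj_on_subset[OF skew_chronology_inj_on_snd[OF P]]) auto
  also have "snd ` ?PR = R"
    using PB unfolding R_def by force
  finally show "card (fst ` ?PR) = card R" .
qed

lemma skew_chronology_boundary_forcer:
  assumes P: "skew_chronology G P" and PB: "snd ` P = skew_closure G {}"
    and uw: "(u, w) \<in> P" and w: "\<not> nbrs G w \<subseteq> skew_closure G {}"
  shows "u \<notin> skew_closure G {}"
proof
  let ?R = "{v \<in> skew_closure G {}. nbrs G v \<subseteq> skew_closure G {}}"
  assume "u \<in> skew_closure G {}"
  then have "u \<in> ?R"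
    using skew_chronology_forcer[OF P uw] PB by simp
  then obtain w' where "(u, w') \<in> P" "w' \<in> ?R"
    using skew_chronology_interior_forcers[OF P PB] by force
  moreover have "w' = w"
    using inj_onD[OF skew_chronology_inj_on_fst[OF P] _ uw \<open>(u, w') \<in> P\<close>] by simp
  ultimately show False using w by blast
qed

lemma skew_chronology_boundary_in_skew_nontrivial:
  assumes "skew_chronology G Q"
    and "\<forall>(u, w) \<in> Q. \<not> nbrs G w \<subseteq> skew_closure G {} \<longrightarrow> u \<notin> skew_closure G {}"
  shows "{w \<in> snd ` Q. \<not> nbrs G w \<subseteq> skew_closure G {}} \<subseteq>
           skew_closure (skew_nontrivial G) {}"
  using assms
proof (induction rule: skew_chronology.induct)
  case (force Q u w)
  let ?B = "skew_closure G {}"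
  have IH: "x \<in> skew_closure (skew_nontrivial G) {}"
    if "x \<in> snd ` Q" "\<not> nbrs G x \<subseteq> ?B" for x
    using force.IH force.prems that by blast
  have "w \<in> skew_closure (skew_nontrivial G) {}" if w: "\<not> nbrs G w \<subseteq> ?B"
  proof (rule skew_closure_forceI)
    have u: "u \<notin> ?B" using force.prems w by simp
    then show "u \<in> verts (skew_nontrivial G)" "w \<in> nbrs (skew_nontrivial G) u"
      using force.hyps by (auto simp: verts_skew_nontrivial nbrs_skew_nontrivial)
    show "nbrs (skew_nontrivial G) u - {w} \<subseteq> skew_closure (skew_nontrivial G) {}"
    proof
      fix x assume x: "x \<in> nbrs (skew_nontrivial G) u - {w}"
      then have "x \<in> snd ` Q" "u \<in> nbrs G x"
        using force.hyps by (auto simp: nbrs_skew_nontrivial nbrs_sym)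
      then show "x \<in> skew_closure (skew_nontrivial G) {}"
        using IH u by blast
    qed
  qed
  then show ?case using IH by auto
qed simp

lemma boundary_in_skew_closure_skew_nontrivial:
  assumes G: "simple_graph G"
    and v: "v \<in> skew_closure G {}" "\<not> nbrs G v \<subseteq> skew_closure G {}"
  shows "v \<in> skew_closure (skew_nontrivial G) {}"
proof -
  obtain P where P: "skew_chronology G P" "snd ` P = skew_closure G {}"
    using ex_skew_chronology[OF G] by blast
  have "\<forall>(u, w) \<in> P. \<not> nbrs G w \<subseteq> skew_closure G {} \<longrightarrow> u \<notin> skew_closure G {}"
    using skew_chronology_boundary_forcer[OF P] by blast
  from skew_chronology_boundary_in_skew_nontrivial[OF P(1) this] show ?thesis
    using v P(2) by blast
qed

lemma skew_closure_subset_skew_nontrivial: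
  assumes G: "simple_graph G"
  shows "skew_closure G S \<subseteq> skew_closure (skew_nontrivial G) S \<union> skew_closure G {}"
proof (rule skew_closure_least)
  show "S \<subseteq> skew_closure (skew_nontrivial G) S \<union> skew_closure G {}"
    using subset_skew_closure[of S] by blast
next
  let ?B = "skew_closure G {}" and ?G' = "skew_nontrivial G"
  fix u v assume u: "u \<in> verts G" and v: "v \<in> nbrs G u"
    and others: "nbrs G u - {v} \<subseteq> skew_closure ?G' S \<union> ?B"
  have "v \<in> skew_closure ?G' S" if vB: "v \<notin> ?B"
  proof (rule skew_closure_forceI)
    have "u \<in> nbrs G v" using v by (simp add: nbrs_sym)
    then show "u \<in> verts ?G'" "v \<in> nbrs ?G' u"
      using u v vB by (auto simp: verts_skew_nontrivial nbrs_skew_nontrivial)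
    show "nbrs ?G' u - {v} \<subseteq> skew_closure ?G' S"
    proof
      fix w assume w: "w \<in> nbrs ?G' u - {v}"
      then have wu: "w \<in> nbrs G u" "u \<notin> ?B \<or> w \<notin> ?B"
        by (auto simp: nbrs_skew_nontrivial)
      with others w have "w \<in> skew_closure ?G' S \<union> ?B" by blast
      then show "w \<in> skew_closure ?G' S"
      proof
        assume wB: "w \<in> ?B"
        have "\<not> nbrs G w \<subseteq> ?B"
          using wu wB by (auto simp: nbrs_sym)
        then have "w \<in> skew_closure ?G' {}"
          by (rule boundary_in_skew_closure_skew_nontrivial[OF G wB])
        then show ?thesis
          using skew_closure_mono[of "{}" S ?G'] by blast
      qed
    qed
  qed
  then show "v \<in> skew_closure ?G' S \<union> ?B" by blast
qed

lemma skew_forcing_set_skew_nontrivial_iff: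
  assumes G: "simple_graph G"
  shows "skew_forcing_set (skew_nontrivial G) S \<longleftrightarrow>
           skew_forcing_set G S \<and> S \<subseteq> verts (skew_nontrivial G)"
proof -
  let ?B = "skew_closure G {}" and ?G' = "skew_nontrivial G"
  have V': "verts ?G' \<subseteq> verts G" "verts G - verts ?G' \<subseteq> ?B"
    by (auto simp: verts_skew_nontrivial)
  have B: "?B \<subseteq> skew_closure G S" by (rule skew_closure_mono) simp
  have B': "verts ?G' \<inter> ?B \<subseteq> skew_closure ?G' S"
    using boundary_in_skew_closure_skew_nontrivial[OF G] skew_closure_mono[of "{}" S ?G']
    by (auto simp: verts_skew_nontrivial)
  have cl: "skew_closure ?G' S \<subseteq> skew_closure G S"
    "skew_closure G S \<subseteq> skew_closure ?G' S \<union> ?B"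
    by (rule skew_closure_skew_nontrivial_subset, rule skew_closure_subset_skew_nontrivial[OF G])
  have "skew_closure ?G' S \<subseteq> verts ?G'" if "S \<subseteq> verts ?G'"
    using skew_closure_subset_verts[OF simple_graph_skew_nontrivial[OF G]] that by blast
  moreover have "skew_closure G S \<subseteq> verts G" if "S \<subseteq> verts G"
    using skew_closure_subset_verts[OF G] that by blast
  ultimately show ?thesis
    unfolding skew_forcing_set_def using V' B B' cl by blast
qed

lemma min_skew_forcing_set_subset_verts_skew_nontrivial:
  assumes G: "simple_graph G" and S: "S \<in> min_skew_forcing_sets G"
  shows "S \<subseteq> verts (skew_nontrivial G)"
  using S min_skew_forcing_set_disjoint[OF G S]
  unfolding min_skew_forcing_sets_def skew_forcing_set_def verts_skew_nontrivial by blast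

lemma Z_minus_skew_nontrivial:
  assumes G: "simple_graph G" shows "Z_minus (skew_nontrivial G) = Z_minus G"
proof (rule antisym)
  obtain S where S: "S \<in> min_skew_forcing_sets G"
    using min_skew_forcing_sets_nonempty[OF G] by blast
  then have "skew_forcing_set (skew_nontrivial G) S"
    using min_skew_forcing_set_subset_verts_skew_nontrivial[OF G S]
    by (simp add: skew_forcing_set_skew_nontrivial_iff[OF G] min_skew_forcing_sets_def)
  then show "Z_minus (skew_nontrivial G) \<le> Z_minus G"
    using Z_minus_le[OF simple_graph_skew_nontrivial[OF G]] S
    by (metis (mono_tags) mem_Collect_eq min_skew_forcing_sets_def)
next
  obtain S where S: "S \<in> min_skew_forcing_sets (skew_nontrivial G)"
    using min_skew_forcing_sets_nonempty[OF simple_graph_skew_nontrivial[OF G]] by blast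
  then have "skew_forcing_set G S"
    by (simp add: skew_forcing_set_skew_nontrivial_iff[OF G] min_skew_forcing_sets_def)
  then show "Z_minus G \<le> Z_minus (skew_nontrivial G)"
    using Z_minus_le[OF G] S by (metis (mono_tags) mem_Collect_eq min_skew_forcing_sets_def)
qed

lemma min_skew_forcing_sets_skew_nontrivial:
  assumes G: "simple_graph G"
  shows "min_skew_forcing_sets (skew_nontrivial G) = min_skew_forcing_sets G"
  using min_skew_forcing_set_subset_verts_skew_nontrivial[OF G]
  unfolding min_skew_forcing_sets_def
  by (auto simp: Z_minus_skew_nontrivial[OF G] skew_forcing_set_skew_nontrivial_iff[OF G])

lemma exchanged_edge_skew_nontrivial_iff:
  assumes "simple_graph G" and "S1 \<in> min_skew_forcing_sets G" and "S1 - S2 = {v1}"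
  shows "{v1, v2} \<in> edges (skew_nontrivial G) \<longleftrightarrow> {v1, v2} \<in> edges G"
  using min_skew_forcing_set_disjoint[OF assms(1,2)] assms(3)
  by (auto simp: edges_skew_nontrivial)

theorem theorem5p20:
  fixes G :: "'a graph"
  assumes "simple_graph G"
  shows "ZTE_minus (skew_nontrivial G) = ZTE_minus G \<and>
         ZTS_minus (skew_nontrivial G) = ZTS_minus G"
proof
  note mins = min_skew_forcing_sets_skew_nontrivial[OF assms]
  show "ZTE_minus (skew_nontrivial G) = ZTE_minus G"
    unfolding ZTE_minus_def mins ..
  show "ZTS_minus (skew_nontrivial G) = ZTS_minus G"
    unfolding ZTS_minus_def mins
    by (intro arg_cong[where f = "Pair _"] Collect_cong ex_cong1 conj_cong refl)
      (use exchanged_edge_skew_nontrivial_iff[OF assms] in blast)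
qed

end
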